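(* Let $M=\{D(c_i;r_i)\}_{i=1}^m$ be a $d$-disk system and let $\mu\ge 0$. Then $\mu=\mu_M$ if and only if the set $\bigcap_{i=1}^m D(c_i;\mu r_i)$ consists of exactly one point.
   Context: A $d$-disk system is a finite collection $M=\{D_1,\dots,D_m\}$ of closed Euclidean balls $D_i=D(c_i;r_i)=\{x\in\mathbb R^d:\|x-c_i\|\le r_i\}$ with $r_i>0$. For a scale $\lambda\ge0$, the rescaled system is $M_\lambda=\{D(c_i;\lambda r_i)\}_{i=1}^m$ (for $\lambda=0$, $D(c_i;0)=\{c_i\}$). The Čech scale of $M$ is $\mu_M=\inf\{\lambda\ge 0:\bigcap_{i=1}^m D(c_i;\lambda r_i)\neq\emptyset\}$. When the intersection $\bigcap_i D(c_i;\mu_M r_i)$ is a single point, that point is denoted $c_M$. *)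

theory Defs
  imports "HOL-Analysis.Analysis"
begin

definition cech_scale :: "nat \<Rightarrow> (nat \<Rightarrow> 'a::euclidean_space) \<Rightarrow> (nat \<Rightarrow> real) \<Rightarrow> real"
  where "cech_scale m c r = Inf {l. l \<ge> 0 \<and> (\<Inter>i\<in>{1..m}. cball (c i) (l * r i)) \<noteq> {}}"

end

theory Submission
  imports Defs
begin

text \<open>A point x lies in all disks rescaled by l exactly when f x \<le> l, where f x is the
  maximum over i of dist (c i) x / r i. The rescaled intersections are thus the sublevel sets of f,
  and the Cech scale is the minimum of f, attained because f is continuous with bounded sublevel
  sets. Below this minimum the intersection is empty, above it the intersection contains a ball
  around a minimiser, and at it the intersection is the set of minimisers: a single point, since
  balls are strictly convex, so the midpoint of two distinct minimisers would do strictly better.\<close>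

lemma dist_midpoint_less:
  fixes p q c :: "'a::real_inner"
  assumes "dist c p \<le> R" "dist c q \<le> R" "p \<noteq> q"
  shows "dist c (midpoint p q) < R"
proof -
  define a b where "a = p - c" and "b = q - c"
  have parallelogram: "norm (a + b)^2 + norm (a - b)^2 = 2 * norm a^2 + 2 * norm b^2"
    by (simp add: power2_norm_eq_inner inner_add_left inner_add_right
        inner_diff_left inner_diff_right inner_commute)
  have "norm a \<le> R" "norm b \<le> R"
    using assms(1,2) by (simp_all add: a_def b_def dist_norm norm_minus_commute)
  then have "norm a^2 \<le> R^2" "norm b^2 \<le> R^2" and "R \<ge> 0"
    by (auto intro: power_mono order_trans[OF norm_ge_zero])
  moreover have "norm (a - b)^2 > 0"
    using assms(3) by (simp add: a_def b_def)
  ultimately have "norm (a + b)^2 < 4 * R^2"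
    using parallelogram by linarith
  then have "norm (a + b)^2 < (2 * R)^2"
    by (simp add: power_mult_distrib)
  then have "norm (a + b) < 2 * R"
    using \<open>R \<ge> 0\<close> by (auto intro: power2_less_imp_less)
  moreover have "midpoint p q - c = inverse 2 *\<^sub>R (a + b)"
    by (simp add: a_def b_def midpoint_def algebra_simps flip: scaleR_add_left)
  then have "dist c (midpoint p q) = norm (a + b) / 2"
    by (simp add: dist_norm norm_minus_commute[of c])
  ultimately show ?thesis
    by simp
qed

lemma continuous_on_Max:
  fixes f :: "'i \<Rightarrow> 'a::topological_space \<Rightarrow> 'b::linorder_topology"
  assumes "finite I" "I \<noteq> {}" "\<And>i. i \<in> I \<Longrightarrow> continuous_on S (f i)"
  shows "continuous_on S (\<lambda>x. Max ((\<lambda>i. f i x) ` I))"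
  using assms
proof (induction I rule: finite_ne_induct)
  case (singleton i)
  then show ?case by simp
next
  case (insert i I)
  then show ?case
    by (simp add: continuous_on_max)
qed

locale disk_system =
  fixes I :: "'i set" and c :: "'i \<Rightarrow> 'a::euclidean_space" and r :: "'i \<Rightarrow> real"
  assumes finite_index: "finite I"
    and index_nonempty: "I \<noteq> {}"
    and radius_pos: "i \<in> I \<Longrightarrow> r i > 0"
begin

definition rescaled :: "real \<Rightarrow> 'a set"
  where "rescaled l = (\<Inter>i\<in>I. cball (c i) (l * r i))"

definition point_scale :: "'a \<Rightarrow> real"
  where "point_scale x = Max ((\<lambda>i. dist (c i) x / r i) ` I)"

lemma point_scale_le_iff: "point_scale x \<le> l \<longleftrightarrow> (\<forall>i\<in>I. dist (c i) x \<le> l * r i)"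
  using finite_index index_nonempty radius_pos
  by (simp add: point_scale_def divide_le_eq)

lemma mem_rescaled_iff: "x \<in> rescaled l \<longleftrightarrow> point_scale x \<le> l"
  by (simp add: rescaled_def point_scale_le_iff)

lemma point_scale_nonneg: "point_scale x \<ge> 0"
proof -
  obtain i where "i \<in> I" using index_nonempty by blast
  then have "dist (c i) x / r i \<le> point_scale x"
    using finite_index by (auto simp: point_scale_def)
  moreover have "dist (c i) x / r i \<ge> 0"
    using radius_pos[OF \<open>i \<in> I\<close>] by simp
  ultimately show ?thesis by linarith
qed

lemma continuous_point_scale: "continuous_on S point_scale"
proof -
  have "continuous_on S (\<lambda>x. dist (c i) x * inverse (r i))" for i
    by (intro continuous_intros)
  then show ?thesis
    unfolding point_scale_def divide_inverse
    by (intro continuous_on_Max finite_index index_nonempty)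
qed

lemma point_scale_attains_min: "\<exists>x0. \<forall>x. point_scale x0 \<le> point_scale x"
proof -
  obtain i and x1 :: 'a where "i \<in> I" using index_nonempty by blast
  define K where "K = {x. point_scale x \<le> point_scale x1}"
  have "K \<subseteq> cball (c i) (point_scale x1 * r i)"
    using \<open>i \<in> I\<close> by (auto simp: K_def point_scale_le_iff)
  then have "bounded K"
    by (rule bounded_subset[OF bounded_cball])
  moreover have "closed K"
    unfolding K_def by (intro closed_Collect_le continuous_point_scale continuous_on_const)
  ultimately have "compact K"
    by (simp add: compact_eq_bounded_closed)
  moreover have "K \<noteq> {}"
    by (auto simp: K_def)
  ultimately obtain x0 where "x0 \<in> K" and min_K: "\<And>x. x \<in> K \<Longrightarrow> point_scale x0 \<le> point_scale x"
    using continuous_attains_inf[OF _ _ continuous_point_scale] by meson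
  have "point_scale x0 \<le> point_scale x" for x
  proof (cases "x \<in> K")
    case False
    then show ?thesis
      using \<open>x0 \<in> K\<close> by (simp add: K_def)
  qed (rule min_K)
  then show ?thesis by blast
qed

text \<open>Strict convexity of balls makes point_scale strictly quasi-convex.\<close>
lemma point_scale_midpoint_less:
  assumes "p \<noteq> q"
  shows "point_scale (midpoint p q) < max (point_scale p) (point_scale q)"
proof -
  define M where "M = max (point_scale p) (point_scale q)"
  have "point_scale p \<le> M" "point_scale q \<le> M"
    by (simp_all add: M_def)
  then have "dist (c i) (midpoint p q) / r i < M" if "i \<in> I" for i
    using that assms radius_pos[OF that]
    by (simp add: point_scale_le_iff divide_less_eq dist_midpoint_less)
  then show ?thesis
    using finite_index index_nonempty by (simp add: point_scale_def M_def)
qed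

lemma rescaled_at_min_eq:
  assumes min: "\<And>x. point_scale x0 \<le> point_scale x"
  shows "rescaled (point_scale x0) = {x0}"
proof -
  have "p = x0" if "point_scale p \<le> point_scale x0" for p
  proof (rule ccontr)
    assume "p \<noteq> x0"
    then have "point_scale (midpoint p x0) < point_scale x0"
      using point_scale_midpoint_less[of p x0] that by simp
    with min show False by (simp add: not_le[symmetric])
  qed
  then show ?thesis
    by (auto simp: mem_rescaled_iff)
qed

lemma cball_subset_rescaled:
  assumes "point_scale x \<le> l" "l \<le> l'"
  shows "cball x ((l' - l) * Min (r ` I)) \<subseteq> rescaled l'"
proof
  fix y assume y: "y \<in> cball x ((l' - l) * Min (r ` I))"
  show "y \<in> rescaled l'"
    unfolding rescaled_def
  proof
    fix i assume "i \<in> I"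
    have "dist (c i) y \<le> dist (c i) x + dist x y"
      by (rule dist_triangle)
    also have "\<dots> \<le> l * r i + (l' - l) * r i"
    proof (rule add_mono)
      show "dist (c i) x \<le> l * r i"
        using assms \<open>i \<in> I\<close> by (simp add: point_scale_le_iff)
      have "dist x y \<le> (l' - l) * Min (r ` I)" using y by simp
      also have "\<dots> \<le> (l' - l) * r i"
        using \<open>i \<in> I\<close> finite_index assms(2) by (intro mult_left_mono) auto
      finally show "dist x y \<le> (l' - l) * r i" .
    qed
    finally show "y \<in> cball (c i) (l' * r i)"
      by (simp add: algebra_simps)
  qed
qed

lemma rescaled_not_singleton:
  assumes "point_scale x \<le> l" "l < l'"
  shows "\<nexists>p. rescaled l' = {p}"
proof
  assume "\<exists>p. rescaled l' = {p}"
  then obtain p where p: "rescaled l' = {p}" ..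
  define \<delta> where "\<delta> = (l' - l) * Min (r ` I)"
  have "Min (r ` I) > 0"
    using finite_index index_nonempty radius_pos by simp
  then have "\<delta> > 0"
    using assms(2) by (simp add: \<delta>_def)
  have "cball x \<delta> \<subseteq> {p}"
    using cball_subset_rescaled[OF assms(1) less_imp_le[OF assms(2)]] p by (simp add: \<delta>_def)
  moreover have "x \<in> cball x \<delta>"
    using \<open>\<delta> > 0\<close> by simp
  ultimately have "cball x \<delta> = {x}"
    by blast
  with \<open>\<delta> > 0\<close> show False
    by (simp add: cball_eq_sing)
qed

lemma Inf_nonempty_scales_eq:
  assumes min: "\<And>x. point_scale x0 \<le> point_scale x"
  shows "Inf {l. 0 \<le> l \<and> rescaled l \<noteq> {}} = point_scale x0"
proof -
  have "{l. 0 \<le> l \<and> rescaled l \<noteq> {}} = {point_scale x0..}"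
    using point_scale_nonneg[of x0]
    by (auto simp: mem_rescaled_iff) (meson min order.trans)
  then show ?thesis
    by simp
qed

theorem rescaled_singleton_iff:
  "(\<exists>p. rescaled \<mu> = {p}) \<longleftrightarrow> \<mu> = Inf {l. 0 \<le> l \<and> rescaled l \<noteq> {}}"
proof -
  obtain x0 where min: "\<And>x. point_scale x0 \<le> point_scale x"
    using point_scale_attains_min by blast
  have "rescaled \<mu> = {}" if "\<mu> < point_scale x0"
    using that by (auto simp: mem_rescaled_iff) (meson min order.trans not_le)
  then show ?thesis
    using rescaled_at_min_eq[OF min] rescaled_not_singleton[of x0 "point_scale x0" \<mu>]
    by (cases \<mu> "point_scale x0" rule: linorder_cases) (auto simp: Inf_nonempty_scales_eq[OF min])
qed

end

theorem lemma2p1: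
  fixes c :: "nat \<Rightarrow> 'a::euclidean_space" and r :: "nat \<Rightarrow> real" and m :: nat and \<mu> :: real
  assumes "m \<ge> 1"
    and "\<And>i. i \<in> {1..m} \<Longrightarrow> r i > 0"
    and "\<mu> \<ge> 0"
  shows "\<mu> = cech_scale m c r \<longleftrightarrow> (\<exists>p. (\<Inter>i\<in>{1..m}. cball (c i) (\<mu> * r i)) = {p})"
proof -
  interpret disk_system "{1..m}" c r
    using assms(1,2) by unfold_locales auto
  show ?thesis
    using rescaled_singleton_iff[of \<mu>] unfolding cech_scale_def rescaled_def by simp
qed

end
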